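(* Let $\mathbb{X}$ be a Cartesian $k$-differential abstract Kleisli category with abstract Kleisli structure $(\mathsf{S},\epsilon,\vartheta)$. Then the subcategory $\vartheta\text{-}\mathsf{nat}[\mathbb{X}]$ of $\vartheta$-natural maps is a sub-Cartesian $k$-differential category of $\mathbb{X}$: it contains all maps $0:A\to\ast$ and all projections, is closed under pairing, under the $k$-module operations on hom-sets ($r\cdot f+s\cdot g$ and $0$), and under the differential combinator (if $f$ is $\vartheta$-natural then so is $\mathsf{D}[f]$), and hence is itself a Cartesian $k$-differential category with the structure inherited from $\mathbb{X}$.
   Context: Fix a commutative semiring $k$. A left $k$-linear category is a category $\mathbb{X}$ in which each hom-set $\mathbb{X}(A,B)$ is a $k$-module (scalar multiplication $r\cdot f$, addition $+$, zero $0$) such that precomposition is $k$-linear: $(r\cdot f+s\cdot g)\circ x=r\cdot(f\circ x)+s\cdot(g\circ x)$. A map $f$ is $k$-linear if $f\circ(r\cdot x+s\cdot y)=r\cdot(f\circ x)+s\cdot(f\circ y)$ for all suitable $x,y$ and $r,s\in k$. A Cartesian left $k$-linear category is a left $k$-linear category with finite products (terminal object $\ast$, projections $\pi_j:A_1\times\cdots\times A_n\to A_j$, pairing $\langle-,\dots,-\rangle$) in which all projections are $k$-linear. A Cartesian $k$-differential category is a Cartesian left $k$-linear category equipped with a differential combinator $\mathsf{D}$ assigning to each $f:A\to B$ a map $\mathsf{D}[f]:A\times A\to B$ such that: [CD.1] $\mathsf{D}[r\cdot f+s\cdot g]=r\cdot\mathsf{D}[f]+s\cdot\mathsf{D}[g]$;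 [CD.2] $\mathsf{D}[f]\circ\langle\pi_1,r\cdot\pi_2+s\cdot\pi_3\rangle=r\cdot(\mathsf{D}[f]\circ\langle\pi_1,\pi_2\rangle)+s\cdot(\mathsf{D}[f]\circ\langle\pi_1,\pi_3\rangle)$ (as maps $A\times A\times A\to B$); [CD.3] $\mathsf{D}[1_A]=\pi_2$ and, for $\pi_j:A_1\times\cdots\times A_n\to A_j$, $\mathsf{D}[\pi_j]=\pi_{n+j}$; [CD.4] $\mathsf{D}[\langle f_1,\dots,f_n\rangle]=\langle\mathsf{D}[f_1],\dots,\mathsf{D}[f_n]\rangle$; [CD.5] $\mathsf{D}[g\circ f]=\mathsf{D}[g]\circ\langle f\circ\pi_1,\mathsf{D}[f]\rangle$; [CD.6] $\mathsf{D}[\mathsf{D}[f]]\circ\langle\pi_1,0,0,\pi_2\rangle=\mathsf{D}[f]$; [CD.7] $\mathsf{D}[\mathsf{D}[f]]\circ\langle\pi_1,\pi_2,\pi_3,\pi_4\rangle=\mathsf{D}[\mathsf{D}[f]]\circ\langle\pi_1,\pi_3,\pi_2,\pi_4\rangle$ (identifying $(A\times A)\times(A\times A)$ with $A\times A\times A\times A$). A map $f$ is $\mathsf{D}$-linear if $\mathsf{D}[f]=f\circ\pi_2$. For Cartesian left $k$-linear categories $\mathbb{X},\mathbb{Y}$, a strong Cartesian $k$-linear functor is a functor $\mathsf{F}:\mathbb{X}\to\mathbb{Y}$ such that $\mathsf{F}(\ast)\to\ast$ is an isomorphism, the canonical maps $\omega_{A_1,\dots,A_n}=\langle\mathsf{F}(\pi_1),\dots,\mathsf{F}(\pi_n)\rangle:\mathsf{F}(A_1\times\cdots\times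 A_n)\to\mathsf{F}(A_1)\times\cdots\times\mathsf{F}(A_n)$ are isomorphisms, and $\mathsf{F}(r\cdot f+s\cdot g)=r\cdot\mathsf{F}(f)+s\cdot\mathsf{F}(g)$. For Cartesian $k$-differential categories, a strong Cartesian $k$-differential functor is a strong Cartesian $k$-linear functor with $\mathsf{D}[\mathsf{F}(f)]=\mathsf{F}(\mathsf{D}[f])\circ\omega^{-1}_{A,A}$ for all $f:A\to B$. An abstract Kleisli structure on a category $\mathbb{X}$ is a triple $(\mathsf{S},\epsilon,\vartheta)$ of an endofunctor $\mathsf{S}$, a natural transformation $\epsilon_A:\mathsf{S}(A)\to A$, and a family of maps $\vartheta_A:A\to\mathsf{S}(A)$ (not necessarily natural) such that $\vartheta_{\mathsf{S}(A)}$ is natural in $A$ and $\epsilon_A\circ\vartheta_A=1_A$, $\epsilon_{\mathsf{S}(A)}\circ\mathsf{S}(\vartheta_A)=1_{\mathsf{S}(A)}$, $\vartheta_{\mathsf{S}(A)}\circ\vartheta_A=\mathsf{S}(\vartheta_A)\circ\vartheta_A$. A map $f:A\to B$ is $\vartheta$-natural if $\vartheta_B\circ f=\mathsf{S}(f)\circ\vartheta_A$; $\vartheta\text{-}\mathsf{nat}[\mathbb{X}]$ denotes the subcategory of $\vartheta$-natural maps. A Cartesian $k$-differential abstract Kleisli category is a Cartesian $k$-differential category $\mathbb{X}$ with an abstract Kleisli structure $(\mathsf{S},\epsilon,\vartheta)$ such that all projections are $\vartheta$-natural, $\mathsf{S}$ is a strong Cartesian $k$-differential functor, and every $\epsilon_A$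 and $\vartheta_A$ is $\mathsf{D}$-linear. *)

theory Defs
  imports Main
begin

text \<open>
  Composition comp g f means g after f.  Finite products
  are presented by a chosen terminal object and chosen binary products
  (from which all finite products are obtained by iteration).
\<close>

record ('o, 'm, 'k) cdak_struct =
  Ob    :: "'o set"
  Arr   :: "'m set"
  dom   :: "'m \<Rightarrow> 'o"
  cod   :: "'m \<Rightarrow> 'o"
  comp  :: "'m \<Rightarrow> 'm \<Rightarrow> 'm"
  ident :: "'o \<Rightarrow> 'm"
  smul  :: "'k \<Rightarrow> 'm \<Rightarrow> 'm"
  add   :: "'m \<Rightarrow> 'm \<Rightarrow> 'm"
  zero  :: "'o \<Rightarrow> 'o \<Rightarrow> 'm"
  termo :: "'o"
  prod  :: "'o \<Rightarrow> 'o \<Rightarrow> 'o"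
  p1    :: "'o \<Rightarrow> 'o \<Rightarrow> 'm"
  p2    :: "'o \<Rightarrow> 'o \<Rightarrow> 'm"
  pair  :: "'m \<Rightarrow> 'm \<Rightarrow> 'm"
  Dif   :: "'m \<Rightarrow> 'm"
  S_ob  :: "'o \<Rightarrow> 'o"
  S_ar  :: "'m \<Rightarrow> 'm"
  eps   :: "'o \<Rightarrow> 'm"
  theta :: "'o \<Rightarrow> 'm"

definition Hom :: "('o, 'm, 'k, 'z) cdak_struct_scheme \<Rightarrow> 'o \<Rightarrow> 'o \<Rightarrow> 'm set" where
  "Hom C A B = {f \<in> Arr C. dom C f = A \<and> cod C f = B}"

definition is_category :: "('o, 'm, 'k, 'z) cdak_struct_scheme \<Rightarrow> bool" where
  "is_category C \<longleftrightarrow>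
     (\<forall>f \<in> Arr C. dom C f \<in> Ob C \<and> cod C f \<in> Ob C) \<and>
     (\<forall>A \<in> Ob C. ident C A \<in> Hom C A A) \<and>
     (\<forall>A \<in> Ob C. \<forall>B \<in> Ob C. \<forall>E \<in> Ob C. \<forall>f \<in> Hom C A B. \<forall>g \<in> Hom C B E.
         comp C g f \<in> Hom C A E) \<and>
     (\<forall>f \<in> Arr C. comp C f (ident C (dom C f)) = f \<and> comp C (ident C (cod C f)) f = f) \<and>
     (\<forall>f \<in> Arr C. \<forall>g \<in> Arr C. \<forall>h \<in> Arr C. cod C f = dom C g \<longrightarrow> cod C g = dom C h \<longrightarrow>
         comp C h (comp C g f) = comp C (comp C h g) f)"

definition hom_modules :: "('o, 'm, 'k::comm_semiring_1, 'z) cdak_struct_scheme \<Rightarrow> bool" where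
  "hom_modules C \<longleftrightarrow>
     (\<forall>A \<in> Ob C. \<forall>B \<in> Ob C.
        zero C A B \<in> Hom C A B \<and>
        (\<forall>f \<in> Hom C A B. \<forall>g \<in> Hom C A B. add C f g \<in> Hom C A B) \<and>
        (\<forall>r. \<forall>f \<in> Hom C A B. smul C r f \<in> Hom C A B) \<and>
        (\<forall>f \<in> Hom C A B. \<forall>g \<in> Hom C A B. \<forall>h \<in> Hom C A B.
            add C (add C f g) h = add C f (add C g h)) \<and>
        (\<forall>f \<in> Hom C A B. \<forall>g \<in> Hom C A B. add C f g = add C g f) \<and>
        (\<forall>f \<in> Hom C A B. add C f (zero C A B) = f) \<and>
        (\<forall>r. \<forall>f \<in> Hom C A B. \<forall>g \<in> Hom C A B.
            smul C r (add C f g) = add C (smul C r f) (smul C r g)) \<and>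
        (\<forall>r s. \<forall>f \<in> Hom C A B. smul C (r + s) f = add C (smul C r f) (smul C s f)) \<and>
        (\<forall>r s. \<forall>f \<in> Hom C A B. smul C (r * s) f = smul C r (smul C s f)) \<and>
        (\<forall>f \<in> Hom C A B. smul C 1 f = f) \<and>
        (\<forall>f \<in> Hom C A B. smul C 0 f = zero C A B) \<and>
        (\<forall>r. smul C r (zero C A B) = zero C A B))"

definition left_k_linear_cat :: "('o, 'm, 'k::comm_semiring_1, 'z) cdak_struct_scheme \<Rightarrow> bool" where
  "left_k_linear_cat C \<longleftrightarrow> is_category C \<and> hom_modules C \<and>
     (\<forall>X \<in> Ob C. \<forall>A \<in> Ob C. \<forall>B \<in> Ob C. \<forall>r s. \<forall>f \<in> Hom C A B. \<forall>g \<in> Hom C A B. \<forall>x \<in> Hom C X A.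
        comp C (add C (smul C r f) (smul C s g)) x
          = add C (smul C r (comp C f x)) (smul C s (comp C g x)))"

definition k_linear_map :: "('o, 'm, 'k::comm_semiring_1, 'z) cdak_struct_scheme \<Rightarrow> 'm \<Rightarrow> bool" where
  "k_linear_map C f \<longleftrightarrow> f \<in> Arr C \<and>
     (\<forall>X \<in> Ob C. \<forall>r s. \<forall>x \<in> Hom C X (dom C f). \<forall>y \<in> Hom C X (dom C f).
        comp C f (add C (smul C r x) (smul C s y))
          = add C (smul C r (comp C f x)) (smul C s (comp C f y)))"

definition has_finite_products :: "('o, 'm, 'k, 'z) cdak_struct_scheme \<Rightarrow> bool" where
  "has_finite_products C \<longleftrightarrow>
     termo C \<in> Ob C \<and>
     (\<forall>A \<in> Ob C. \<exists>!t. t \<in> Hom C A (termo C)) \<and>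
     (\<forall>A \<in> Ob C. \<forall>B \<in> Ob C.
        prod C A B \<in> Ob C \<and>
        p1 C A B \<in> Hom C (prod C A B) A \<and>
        p2 C A B \<in> Hom C (prod C A B) B \<and>
        (\<forall>X \<in> Ob C. \<forall>f \<in> Hom C X A. \<forall>g \<in> Hom C X B.
           pair C f g \<in> Hom C X (prod C A B) \<and>
           comp C (p1 C A B) (pair C f g) = f \<and>
           comp C (p2 C A B) (pair C f g) = g) \<and>
        (\<forall>X \<in> Ob C. \<forall>h \<in> Hom C X (prod C A B).
           pair C (comp C (p1 C A B) h) (comp C (p2 C A B) h) = h))"

definition cartesian_left_k_linear_cat :: "('o, 'm, 'k::comm_semiring_1, 'z) cdak_struct_scheme \<Rightarrow> bool" where
  "cartesian_left_k_linear_cat C \<longleftrightarrow> left_k_linear_cat C \<and> has_finite_products C \<and>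
     (\<forall>A \<in> Ob C. \<forall>B \<in> Ob C. k_linear_map C (p1 C A B) \<and> k_linear_map C (p2 C A B))"

definition cartesian_k_differential_cat :: "('o, 'm, 'k::comm_semiring_1, 'z) cdak_struct_scheme \<Rightarrow> bool" where
  "cartesian_k_differential_cat C \<longleftrightarrow> cartesian_left_k_linear_cat C \<and>
     (\<forall>A \<in> Ob C. \<forall>B \<in> Ob C. \<forall>f \<in> Hom C A B. Dif C f \<in> Hom C (prod C A A) B) \<and>
     \<comment> \<open>CD.1\<close>
     (\<forall>A \<in> Ob C. \<forall>B \<in> Ob C. \<forall>r s. \<forall>f \<in> Hom C A B. \<forall>g \<in> Hom C A B.
        Dif C (add C (smul C r f) (smul C s g)) = add C (smul C r (Dif C f)) (smul C s (Dif C g))) \<and>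
     \<comment> \<open>CD.2, on A \<times> (A \<times> A) with projections q1 q2 q3\<close>
     (\<forall>A \<in> Ob C. \<forall>B \<in> Ob C. \<forall>r s. \<forall>f \<in> Hom C A B.
        let q1 = p1 C A (prod C A A);
            q2 = comp C (p1 C A A) (p2 C A (prod C A A));
            q3 = comp C (p2 C A A) (p2 C A (prod C A A))
        in comp C (Dif C f) (pair C q1 (add C (smul C r q2) (smul C s q3)))
           = add C (smul C r (comp C (Dif C f) (pair C q1 q2)))
                   (smul C s (comp C (Dif C f) (pair C q1 q3)))) \<and>
     \<comment> \<open>CD.3\<close>
     (\<forall>A \<in> Ob C. Dif C (ident C A) = p2 C A A) \<and>
     (\<forall>A \<in> Ob C. \<forall>B \<in> Ob C.
        Dif C (p1 C A B) = comp C (p1 C A B) (p2 C (prod C A B) (prod C A B)) \<and>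
        Dif C (p2 C A B) = comp C (p2 C A B) (p2 C (prod C A B) (prod C A B))) \<and>
     \<comment> \<open>CD.4\<close>
     (\<forall>X \<in> Ob C. \<forall>A \<in> Ob C. \<forall>B \<in> Ob C. \<forall>f \<in> Hom C X A. \<forall>g \<in> Hom C X B.
        Dif C (pair C f g) = pair C (Dif C f) (Dif C g)) \<and>
     \<comment> \<open>CD.5\<close>
     (\<forall>A \<in> Ob C. \<forall>B \<in> Ob C. \<forall>E \<in> Ob C. \<forall>f \<in> Hom C A B. \<forall>g \<in> Hom C B E.
        Dif C (comp C g f) = comp C (Dif C g) (pair C (comp C f (p1 C A A)) (Dif C f))) \<and>
     \<comment> \<open>CD.6\<close>
     (\<forall>A \<in> Ob C. \<forall>B \<in> Ob C. \<forall>f \<in> Hom C A B.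
        comp C (Dif C (Dif C f))
          (pair C (pair C (p1 C A A) (zero C (prod C A A) A))
                  (pair C (zero C (prod C A A) A) (p2 C A A)))
        = Dif C f) \<and>
     \<comment> \<open>CD.7, on (A \<times> A) \<times> (A \<times> A) with projections q1 .. q4\<close>
     (\<forall>A \<in> Ob C. \<forall>B \<in> Ob C. \<forall>f \<in> Hom C A B.
        let P = prod C A A;
            q1 = comp C (p1 C A A) (p1 C P P);
            q2 = comp C (p2 C A A) (p1 C P P);
            q3 = comp C (p1 C A A) (p2 C P P);
            q4 = comp C (p2 C A A) (p2 C P P)
        in comp C (Dif C (Dif C f)) (pair C (pair C q1 q2) (pair C q3 q4))
           = comp C (Dif C (Dif C f)) (pair C (pair C q1 q3) (pair C q2 q4)))"

definition D_linear :: "('o, 'm, 'k, 'z) cdak_struct_scheme \<Rightarrow> 'm \<Rightarrow> bool" where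
  "D_linear C f \<longleftrightarrow> Dif C f = comp C f (p2 C (dom C f) (dom C f))"

definition is_iso :: "('o, 'm, 'k, 'z) cdak_struct_scheme \<Rightarrow> 'm \<Rightarrow> bool" where
  "is_iso C f \<longleftrightarrow> f \<in> Arr C \<and>
     (\<exists>g \<in> Hom C (cod C f) (dom C f). comp C g f = ident C (dom C f) \<and> comp C f g = ident C (cod C f))"

definition is_inverse :: "('o, 'm, 'k, 'z) cdak_struct_scheme \<Rightarrow> 'm \<Rightarrow> 'm \<Rightarrow> bool" where
  "is_inverse C g f \<longleftrightarrow> f \<in> Arr C \<and> g \<in> Hom C (cod C f) (dom C f) \<and>
     comp C g f = ident C (dom C f) \<and> comp C f g = ident C (cod C f)"

definition S_endofunctor :: "('o, 'm, 'k, 'z) cdak_struct_scheme \<Rightarrow> bool" where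
  "S_endofunctor C \<longleftrightarrow>
     (\<forall>A \<in> Ob C. S_ob C A \<in> Ob C) \<and>
     (\<forall>A \<in> Ob C. \<forall>B \<in> Ob C. \<forall>f \<in> Hom C A B. S_ar C f \<in> Hom C (S_ob C A) (S_ob C B)) \<and>
     (\<forall>A \<in> Ob C. S_ar C (ident C A) = ident C (S_ob C A)) \<and>
     (\<forall>A \<in> Ob C. \<forall>B \<in> Ob C. \<forall>E \<in> Ob C. \<forall>f \<in> Hom C A B. \<forall>g \<in> Hom C B E.
        S_ar C (comp C g f) = comp C (S_ar C g) (S_ar C f))"

definition omega :: "('o, 'm, 'k, 'z) cdak_struct_scheme \<Rightarrow> 'o \<Rightarrow> 'o \<Rightarrow> 'm" where
  "omega C A B = pair C (S_ar C (p1 C A B)) (S_ar C (p2 C A B))"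

definition S_strong_cartesian_k_linear :: "('o, 'm, 'k::comm_semiring_1, 'z) cdak_struct_scheme \<Rightarrow> bool" where
  "S_strong_cartesian_k_linear C \<longleftrightarrow> S_endofunctor C \<and>
     (\<forall>t \<in> Hom C (S_ob C (termo C)) (termo C). is_iso C t) \<and>
     (\<forall>A \<in> Ob C. \<forall>B \<in> Ob C. is_iso C (omega C A B)) \<and>
     (\<forall>A \<in> Ob C. \<forall>B \<in> Ob C. \<forall>r s. \<forall>f \<in> Hom C A B. \<forall>g \<in> Hom C A B.
        S_ar C (add C (smul C r f) (smul C s g)) = add C (smul C r (S_ar C f)) (smul C s (S_ar C g)))"

definition S_strong_cartesian_k_differential :: "('o, 'm, 'k::comm_semiring_1, 'z) cdak_struct_scheme \<Rightarrow> bool" where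
  "S_strong_cartesian_k_differential C \<longleftrightarrow> S_strong_cartesian_k_linear C \<and>
     (\<forall>A \<in> Ob C. \<forall>B \<in> Ob C. \<forall>f \<in> Hom C A B. \<forall>w.
        is_inverse C w (omega C A A) \<longrightarrow> Dif C (S_ar C f) = comp C (S_ar C (Dif C f)) w)"

definition abstract_kleisli :: "('o, 'm, 'k, 'z) cdak_struct_scheme \<Rightarrow> bool" where
  "abstract_kleisli C \<longleftrightarrow> S_endofunctor C \<and>
     (\<forall>A \<in> Ob C. eps C A \<in> Hom C (S_ob C A) A) \<and>
     (\<forall>A \<in> Ob C. theta C A \<in> Hom C A (S_ob C A)) \<and>
     (\<forall>A \<in> Ob C. \<forall>B \<in> Ob C. \<forall>f \<in> Hom C A B.
        comp C (eps C B) (S_ar C f) = comp C f (eps C A)) \<and>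
     (\<forall>A \<in> Ob C. \<forall>B \<in> Ob C. \<forall>f \<in> Hom C A B.
        comp C (theta C (S_ob C B)) (S_ar C f) = comp C (S_ar C (S_ar C f)) (theta C (S_ob C A))) \<and>
     (\<forall>A \<in> Ob C. comp C (eps C A) (theta C A) = ident C A) \<and>
     (\<forall>A \<in> Ob C. comp C (eps C (S_ob C A)) (S_ar C (theta C A)) = ident C (S_ob C A)) \<and>
     (\<forall>A \<in> Ob C. comp C (theta C (S_ob C A)) (theta C A) = comp C (S_ar C (theta C A)) (theta C A))"

definition theta_natural :: "('o, 'm, 'k, 'z) cdak_struct_scheme \<Rightarrow> 'm \<Rightarrow> bool" where
  "theta_natural C f \<longleftrightarrow> f \<in> Arr C \<and>
     comp C (theta C (cod C f)) f = comp C (S_ar C f) (theta C (dom C f))"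

definition cartesian_k_differential_abstract_kleisli :: "('o, 'm, 'k::comm_semiring_1, 'z) cdak_struct_scheme \<Rightarrow> bool" where
  "cartesian_k_differential_abstract_kleisli C \<longleftrightarrow>
     cartesian_k_differential_cat C \<and> abstract_kleisli C \<and>
     (\<forall>A \<in> Ob C. \<forall>B \<in> Ob C. theta_natural C (p1 C A B) \<and> theta_natural C (p2 C A B)) \<and>
     S_strong_cartesian_k_differential C \<and>
     (\<forall>A \<in> Ob C. D_linear C (eps C A) \<and> D_linear C (theta C A))"

definition theta_nat_sub :: "('o, 'm, 'k, 'z) cdak_struct_scheme \<Rightarrow> ('o, 'm, 'k, 'z) cdak_struct_scheme" where
  "theta_nat_sub C = C\<lparr>Arr := {f \<in> Arr C. theta_natural C f}\<rparr>"

end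

theory Submission
  imports Defs
begin

text \<open>
  Identities, composites and
  projections are theta-natural, and so are pairings, since omega = <S(pi1), S(pi2)> is
  invertible. Because theta is D-linear it is k-linear, and S is k-linear, so linear
  combinations and zero maps are theta-natural. For the differential, D-linearity of theta
  gives D[theta o f] = theta o D[f], while the strong differential functor S gives
  D[S(f) o theta] = S(D[f]) o omega^-1 o <theta o pi1, theta o pi2> = S(D[f]) o theta,
  because omega o theta = theta x theta. The equational axioms of a Cartesian k-differential
  category then restrict to any class of maps with these closure properties.
\<close>

locale cartesian_k_differential_category =
  fixes C :: "('o, 'm, 'k::comm_semiring_1, 'z) cdak_struct_scheme"
  assumes cartesian_k_differential: "cartesian_k_differential_cat C"
begin

lemma cartesian_left_k_linear: "cartesian_left_k_linear_cat C"
  using cartesian_k_differential unfolding cartesian_k_differential_cat_def by blast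

lemma left_k_linear: "left_k_linear_cat C"
  and finite_products: "has_finite_products C"
  using cartesian_left_k_linear unfolding cartesian_left_k_linear_cat_def by blast+

lemma category: "is_category C"
  and hom_modules: "hom_modules C"
  using left_k_linear unfolding left_k_linear_cat_def by blast+

lemma dom_in_Ob [simp]: "f \<in> Arr C \<Longrightarrow> dom C f \<in> Ob C"
  and cod_in_Ob [simp]: "f \<in> Arr C \<Longrightarrow> cod C f \<in> Ob C"
  using category unfolding is_category_def by blast+

lemma ident_in_Arr [simp]: "A \<in> Ob C \<Longrightarrow> ident C A \<in> Arr C"
  and dom_ident [simp]: "A \<in> Ob C \<Longrightarrow> dom C (ident C A) = A"
  and cod_ident [simp]: "A \<in> Ob C \<Longrightarrow> cod C (ident C A) = A"
  using category unfolding is_category_def Hom_def by blast+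

lemma comp_typing:
  assumes "f \<in> Arr C" "g \<in> Arr C" "cod C f = dom C g"
  shows "comp C g f \<in> Hom C (dom C f) (cod C g)"
proof -
  have "\<forall>A\<in>Ob C. \<forall>B\<in>Ob C. \<forall>E\<in>Ob C. \<forall>f\<in>Hom C A B. \<forall>g\<in>Hom C B E. comp C g f \<in> Hom C A E"
    using category unfolding is_category_def by blast
  from this[rule_format, of "dom C f" "cod C f" "cod C g" f g] show ?thesis
    using assms by (simp add: Hom_def)
qed

lemma comp_in_Arr [simp]: "f \<in> Arr C \<Longrightarrow> g \<in> Arr C \<Longrightarrow> cod C f = dom C g \<Longrightarrow> comp C g f \<in> Arr C"
  and dom_comp [simp]: "f \<in> Arr C \<Longrightarrow> g \<in> Arr C \<Longrightarrow> cod C f = dom C g \<Longrightarrow> dom C (comp C g f) = dom C f"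
  and cod_comp [simp]: "f \<in> Arr C \<Longrightarrow> g \<in> Arr C \<Longrightarrow> cod C f = dom C g \<Longrightarrow> cod C (comp C g f) = cod C g"
  using comp_typing by (auto simp: Hom_def)

lemma comp_ident_right [simp]: "f \<in> Arr C \<Longrightarrow> dom C f = A \<Longrightarrow> comp C f (ident C A) = f"
  and comp_ident_left [simp]: "f \<in> Arr C \<Longrightarrow> cod C f = A \<Longrightarrow> comp C (ident C A) f = f"
  using category unfolding is_category_def by blast+

lemma comp_assoc [simp]:
  "f \<in> Arr C \<Longrightarrow> g \<in> Arr C \<Longrightarrow> h \<in> Arr C \<Longrightarrow> cod C f = dom C g \<Longrightarrow> cod C g = dom C h \<Longrightarrow>
   comp C (comp C h g) f = comp C h (comp C g f)"
  using category unfolding is_category_def by metis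

lemma hom_module_laws:
  assumes "A \<in> Ob C" "B \<in> Ob C"
  shows "zero C A B \<in> Hom C A B \<and>
        (\<forall>f \<in> Hom C A B. \<forall>g \<in> Hom C A B. add C f g \<in> Hom C A B) \<and>
        (\<forall>r. \<forall>f \<in> Hom C A B. smul C r f \<in> Hom C A B) \<and>
        (\<forall>f \<in> Hom C A B. \<forall>g \<in> Hom C A B. \<forall>h \<in> Hom C A B.
            add C (add C f g) h = add C f (add C g h)) \<and>
        (\<forall>f \<in> Hom C A B. \<forall>g \<in> Hom C A B. add C f g = add C g f) \<and>
        (\<forall>f \<in> Hom C A B. add C f (zero C A B) = f) \<and>
        (\<forall>r. \<forall>f \<in> Hom C A B. \<forall>g \<in> Hom C A B.
            smul C r (add C f g) = add C (smul C r f) (smul C r g)) \<and>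
        (\<forall>r s. \<forall>f \<in> Hom C A B. smul C (r + s) f = add C (smul C r f) (smul C s f)) \<and>
        (\<forall>r s. \<forall>f \<in> Hom C A B. smul C (r * s) f = smul C r (smul C s f)) \<and>
        (\<forall>f \<in> Hom C A B. smul C 1 f = f) \<and>
        (\<forall>f \<in> Hom C A B. smul C 0 f = zero C A B) \<and>
        (\<forall>r. smul C r (zero C A B) = zero C A B)"
  using hom_modules[unfolded hom_modules_def, rule_format, OF assms] .

lemma zero_in_Arr [simp]: "A \<in> Ob C \<Longrightarrow> B \<in> Ob C \<Longrightarrow> zero C A B \<in> Arr C"
  and dom_zero [simp]: "A \<in> Ob C \<Longrightarrow> B \<in> Ob C \<Longrightarrow> dom C (zero C A B) = A"
  and cod_zero [simp]: "A \<in> Ob C \<Longrightarrow> B \<in> Ob C \<Longrightarrow> cod C (zero C A B) = B"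
  using hom_module_laws by (auto simp: Hom_def)

lemma add_typing:
  "f \<in> Arr C \<Longrightarrow> g \<in> Arr C \<Longrightarrow> dom C g = dom C f \<Longrightarrow> cod C g = cod C f \<Longrightarrow>
   add C f g \<in> Hom C (dom C f) (cod C f)"
  using hom_module_laws[of "dom C f" "cod C f"] by (auto simp: Hom_def)

lemma add_in_Arr [simp]: "f \<in> Arr C \<Longrightarrow> g \<in> Arr C \<Longrightarrow> dom C g = dom C f \<Longrightarrow> cod C g = cod C f \<Longrightarrow> add C f g \<in> Arr C"
  and dom_add [simp]: "f \<in> Arr C \<Longrightarrow> g \<in> Arr C \<Longrightarrow> dom C g = dom C f \<Longrightarrow> cod C g = cod C f \<Longrightarrow> dom C (add C f g) = dom C f"
  and cod_add [simp]: "f \<in> Arr C \<Longrightarrow> g \<in> Arr C \<Longrightarrow> dom C g = dom C f \<Longrightarrow> cod C g = cod C f \<Longrightarrow> cod C (add C f g) = cod C f"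
  using add_typing by (auto simp: Hom_def)

lemma smul_typing: "f \<in> Arr C \<Longrightarrow> smul C r f \<in> Hom C (dom C f) (cod C f)"
  using hom_module_laws[of "dom C f" "cod C f"] by (auto simp: Hom_def)

lemma smul_in_Arr [simp]: "f \<in> Arr C \<Longrightarrow> smul C r f \<in> Arr C"
  and dom_smul [simp]: "f \<in> Arr C \<Longrightarrow> dom C (smul C r f) = dom C f"
  and cod_smul [simp]: "f \<in> Arr C \<Longrightarrow> cod C (smul C r f) = cod C f"
  using smul_typing by (auto simp: Hom_def)

lemma add_zero_right: "f \<in> Arr C \<Longrightarrow> dom C f = A \<Longrightarrow> cod C f = B \<Longrightarrow> add C f (zero C A B) = f"
  and smul_zero_scalar: "f \<in> Arr C \<Longrightarrow> smul C 0 f = zero C (dom C f) (cod C f)"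
  and smul_one: "f \<in> Arr C \<Longrightarrow> smul C 1 f = f"
  using hom_module_laws[of "dom C f" "cod C f"] by (auto simp: Hom_def)

lemma zero_eq_lincomb: "A \<in> Ob C \<Longrightarrow> B \<in> Ob C \<Longrightarrow>
  zero C A B = add C (smul C 0 (zero C A B)) (smul C 0 (zero C A B))"
  by (simp add: smul_zero_scalar add_zero_right)

lemma comp_lincomb_left:
  "f \<in> Arr C \<Longrightarrow> g \<in> Arr C \<Longrightarrow> x \<in> Arr C \<Longrightarrow> dom C g = dom C f \<Longrightarrow> cod C g = cod C f \<Longrightarrow>
   cod C x = dom C f \<Longrightarrow>
   comp C (add C (smul C r f) (smul C s g)) x = add C (smul C r (comp C f x)) (smul C s (comp C g x))"
  using left_k_linear unfolding left_k_linear_cat_def Hom_def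
  by (smt (verit, best) cod_in_Ob dom_in_Ob mem_Collect_eq)

lemma comp_zero_left [simp]:
  assumes "x \<in> Arr C" "cod C x = A" "B \<in> Ob C"
  shows "comp C (zero C A B) x = zero C (dom C x) B"
proof -
  have "A \<in> Ob C" using assms by auto
  then have "comp C (zero C A B) x = comp C (add C (smul C 0 (zero C A B)) (smul C 0 (zero C A B))) x"
    using zero_eq_lincomb assms(3) by simp
  also have "\<dots> = add C (smul C 0 (comp C (zero C A B) x)) (smul C 0 (comp C (zero C A B) x))"
    using assms \<open>A \<in> Ob C\<close> by (simp add: comp_lincomb_left)
  also have "\<dots> = zero C (dom C x) B" using assms \<open>A \<in> Ob C\<close> by (simp add: smul_zero_scalar add_zero_right)
  finally show ?thesis .
qed

lemma terminal_in_Ob [simp]: "termo C \<in> Ob C"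
  and terminal_unique: "A \<in> Ob C \<Longrightarrow> \<exists>!t. t \<in> Hom C A (termo C)"
  using finite_products unfolding has_finite_products_def by blast+

lemma product_laws:
  assumes "A \<in> Ob C" "B \<in> Ob C"
  shows "prod C A B \<in> Ob C \<and>
        p1 C A B \<in> Hom C (prod C A B) A \<and>
        p2 C A B \<in> Hom C (prod C A B) B \<and>
        (\<forall>X \<in> Ob C. \<forall>f \<in> Hom C X A. \<forall>g \<in> Hom C X B.
           pair C f g \<in> Hom C X (prod C A B) \<and>
           comp C (p1 C A B) (pair C f g) = f \<and>
           comp C (p2 C A B) (pair C f g) = g) \<and>
        (\<forall>X \<in> Ob C. \<forall>h \<in> Hom C X (prod C A B).
           pair C (comp C (p1 C A B) h) (comp C (p2 C A B) h) = h)"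
  using finite_products[unfolded has_finite_products_def, THEN conjunct2, THEN conjunct2, rule_format, OF assms] .

lemma prod_in_Ob [simp]: "A \<in> Ob C \<Longrightarrow> B \<in> Ob C \<Longrightarrow> prod C A B \<in> Ob C"
  using product_laws by blast

lemma p1_in_Arr [simp]: "A \<in> Ob C \<Longrightarrow> B \<in> Ob C \<Longrightarrow> p1 C A B \<in> Arr C"
  and dom_p1 [simp]: "A \<in> Ob C \<Longrightarrow> B \<in> Ob C \<Longrightarrow> dom C (p1 C A B) = prod C A B"
  and cod_p1 [simp]: "A \<in> Ob C \<Longrightarrow> B \<in> Ob C \<Longrightarrow> cod C (p1 C A B) = A"
  and p2_in_Arr [simp]: "A \<in> Ob C \<Longrightarrow> B \<in> Ob C \<Longrightarrow> p2 C A B \<in> Arr C"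
  and dom_p2 [simp]: "A \<in> Ob C \<Longrightarrow> B \<in> Ob C \<Longrightarrow> dom C (p2 C A B) = prod C A B"
  and cod_p2 [simp]: "A \<in> Ob C \<Longrightarrow> B \<in> Ob C \<Longrightarrow> cod C (p2 C A B) = B"
  using product_laws unfolding Hom_def by blast+

lemma pair_laws:
  assumes "f \<in> Arr C" "g \<in> Arr C" "dom C g = dom C f"
  shows "pair C f g \<in> Hom C (dom C f) (prod C (cod C f) (cod C g)) \<and>
    comp C (p1 C (cod C f) (cod C g)) (pair C f g) = f \<and>
    comp C (p2 C (cod C f) (cod C g)) (pair C f g) = g"
proof -
  have "\<forall>X \<in> Ob C. \<forall>f' \<in> Hom C X (cod C f). \<forall>g' \<in> Hom C X (cod C g).
      pair C f' g' \<in> Hom C X (prod C (cod C f) (cod C g)) \<and>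
      comp C (p1 C (cod C f) (cod C g)) (pair C f' g') = f' \<and>
      comp C (p2 C (cod C f) (cod C g)) (pair C f' g') = g'"
    using product_laws[of "cod C f" "cod C g"] assms by simp
  from this[rule_format, of "dom C f" f g] show ?thesis
    using assms by (simp add: Hom_def)
qed

lemma pair_in_Arr [simp]: "f \<in> Arr C \<Longrightarrow> g \<in> Arr C \<Longrightarrow> dom C g = dom C f \<Longrightarrow> pair C f g \<in> Arr C"
  and dom_pair [simp]: "f \<in> Arr C \<Longrightarrow> g \<in> Arr C \<Longrightarrow> dom C g = dom C f \<Longrightarrow> dom C (pair C f g) = dom C f"
  and cod_pair [simp]: "f \<in> Arr C \<Longrightarrow> g \<in> Arr C \<Longrightarrow> dom C g = dom C f \<Longrightarrow>
     cod C (pair C f g) = prod C (cod C f) (cod C g)"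
  using pair_laws unfolding Hom_def by blast+

lemma p1_pair [simp]: "f \<in> Arr C \<Longrightarrow> g \<in> Arr C \<Longrightarrow> dom C g = dom C f \<Longrightarrow> cod C f = A \<Longrightarrow> cod C g = B \<Longrightarrow>
   comp C (p1 C A B) (pair C f g) = f"
  and p2_pair [simp]: "f \<in> Arr C \<Longrightarrow> g \<in> Arr C \<Longrightarrow> dom C g = dom C f \<Longrightarrow> cod C f = A \<Longrightarrow> cod C g = B \<Longrightarrow>
   comp C (p2 C A B) (pair C f g) = g"
  using pair_laws by blast+

lemma pair_eta: "h \<in> Arr C \<Longrightarrow> A \<in> Ob C \<Longrightarrow> B \<in> Ob C \<Longrightarrow> cod C h = prod C A B \<Longrightarrow>
   pair C (comp C (p1 C A B) h) (comp C (p2 C A B) h) = h"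
  using product_laws[of A B] unfolding Hom_def by auto

lemma pair_comp [simp]:
  assumes "f \<in> Arr C" "g \<in> Arr C" "h \<in> Arr C" "dom C g = dom C f" "cod C h = dom C f"
  shows "comp C (pair C f g) h = pair C (comp C f h) (comp C g h)"
proof -
  let ?k = "comp C (pair C f g) h"
  have "comp C (p1 C (cod C f) (cod C g)) ?k = comp C f h"
    and "comp C (p2 C (cod C f) (cod C g)) ?k = comp C g h"
    using assms by (simp_all flip: comp_assoc)
  moreover have "pair C (comp C (p1 C (cod C f) (cod C g)) ?k) (comp C (p2 C (cod C f) (cod C g)) ?k) = ?k"
    using assms by (intro pair_eta) auto
  ultimately show ?thesis by simp
qed

lemma Dif_typing:
  assumes "f \<in> Arr C"
  shows "Dif C f \<in> Hom C (prod C (dom C f) (dom C f)) (cod C f)"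
proof -
  have "\<forall>A \<in> Ob C. \<forall>B \<in> Ob C. \<forall>f \<in> Hom C A B. Dif C f \<in> Hom C (prod C A A) B"
    using cartesian_k_differential unfolding cartesian_k_differential_cat_def by (elim conjE) assumption
  from this[rule_format, of "dom C f" "cod C f" f] show ?thesis
    using assms by (simp add: Hom_def)
qed

lemma Dif_in_Arr [simp]: "f \<in> Arr C \<Longrightarrow> Dif C f \<in> Arr C"
  and dom_Dif [simp]: "f \<in> Arr C \<Longrightarrow> dom C (Dif C f) = prod C (dom C f) (dom C f)"
  and cod_Dif [simp]: "f \<in> Arr C \<Longrightarrow> cod C (Dif C f) = cod C f"
  using Dif_typing unfolding Hom_def by blast+

lemma Dif_comp:
  assumes "f \<in> Arr C" "g \<in> Arr C" "cod C f = dom C g"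
  shows "Dif C (comp C g f) = comp C (Dif C g) (pair C (comp C f (p1 C (dom C f) (dom C f))) (Dif C f))"
proof -
  have "\<forall>A \<in> Ob C. \<forall>B \<in> Ob C. \<forall>E \<in> Ob C. \<forall>f \<in> Hom C A B. \<forall>g \<in> Hom C B E.
        Dif C (comp C g f) = comp C (Dif C g) (pair C (comp C f (p1 C A A)) (Dif C f))"
    using cartesian_k_differential unfolding cartesian_k_differential_cat_def by (elim conjE) assumption
  from this[rule_format, of "dom C f" "cod C f" "cod C g" f g] show ?thesis
    using assms by (simp add: Hom_def)
qed

lemma Dif_lincomb_direction:
  assumes "f \<in> Arr C" "dom C f = A"
  defines "q1 \<equiv> p1 C A (prod C A A)"
    and "q2 \<equiv> comp C (p1 C A A) (p2 C A (prod C A A))"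
    and "q3 \<equiv> comp C (p2 C A A) (p2 C A (prod C A A))"
  shows "comp C (Dif C f) (pair C q1 (add C (smul C r q2) (smul C s q3)))
       = add C (smul C r (comp C (Dif C f) (pair C q1 q2))) (smul C s (comp C (Dif C f) (pair C q1 q3)))"
proof -
  have "\<forall>A \<in> Ob C. \<forall>B \<in> Ob C. \<forall>r s. \<forall>f \<in> Hom C A B.
        let q1 = p1 C A (prod C A A);
            q2 = comp C (p1 C A A) (p2 C A (prod C A A));
            q3 = comp C (p2 C A A) (p2 C A (prod C A A))
        in comp C (Dif C f) (pair C q1 (add C (smul C r q2) (smul C s q3)))
           = add C (smul C r (comp C (Dif C f) (pair C q1 q2)))
                   (smul C s (comp C (Dif C f) (pair C q1 q3)))"
    using cartesian_k_differential unfolding cartesian_k_differential_cat_def by (elim conjE) assumption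
  moreover have "A \<in> Ob C" "f \<in> Hom C A (cod C f)"
    using assms by (auto simp: Hom_def)
  ultimately show ?thesis
    unfolding q1_def q2_def q3_def Let_def by (meson cod_in_Ob assms(1))
qed

lemma D_linear_imp_k_linear_map:
  assumes f: "f \<in> Arr C" and "D_linear C f"
  shows "k_linear_map C f"
  unfolding k_linear_map_def
proof (intro conjI ballI allI f)
  fix X r s x y
  assume "X \<in> Ob C" and x: "x \<in> Hom C X (dom C f)" and y: "y \<in> Hom C X (dom C f)"
  define A where "A = dom C f"
  have A: "A \<in> Ob C" and D: "Dif C f = comp C f (p2 C A A)"
    using f \<open>D_linear C f\<close> by (simp_all add: A_def D_linear_def)
  let ?q1 = "p1 C A (prod C A A)" and ?q2 = "comp C (p1 C A A) (p2 C A (prod C A A))"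
    and ?q3 = "comp C (p2 C A A) (p2 C A (prod C A A))"
  let ?h = "pair C x (pair C x y)"
  \<comment> \<open>Precompose CD.2 with \<open>\<langle>x, \<langle>x, y\<rangle>\<rangle>\<close>; D-linearity discards the base point.\<close>
  have "comp C (comp C (Dif C f) (pair C ?q1 (add C (smul C r ?q2) (smul C s ?q3)))) ?h
      = comp C (add C (smul C r (comp C (Dif C f) (pair C ?q1 ?q2))) (smul C s (comp C (Dif C f) (pair C ?q1 ?q3)))) ?h"
    using Dif_lincomb_direction[OF f A_def[symmetric]] by simp
  moreover have "comp C (comp C (Dif C f) (pair C ?q1 (add C (smul C r ?q2) (smul C s ?q3)))) ?h
      = comp C f (add C (smul C r x) (smul C s y))"
    using f x y A by (simp add: Hom_def A_def comp_lincomb_left D)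
  moreover have "comp C (add C (smul C r (comp C (Dif C f) (pair C ?q1 ?q2))) (smul C s (comp C (Dif C f) (pair C ?q1 ?q3)))) ?h
      = add C (smul C r (comp C f x)) (smul C s (comp C f y))"
    using f x y A by (simp add: Hom_def A_def comp_lincomb_left D)
  ultimately show "comp C f (add C (smul C r x) (smul C s y)) = add C (smul C r (comp C f x)) (smul C s (comp C f y))"
    by simp
qed

lemma Dif_comp_D_linear:
  assumes "f \<in> Arr C" "g \<in> Arr C" "cod C f = dom C g" "D_linear C g"
  shows "Dif C (comp C g f) = comp C g (Dif C f)"
  using assms by (simp add: Dif_comp D_linear_def)

lemma k_linear_map_comp_zero:
  assumes "k_linear_map C f" "X \<in> Ob C"
  shows "comp C f (zero C X (dom C f)) = zero C X (cod C f)"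
proof -
  have f: "f \<in> Arr C" using assms(1) unfolding k_linear_map_def by blast
  let ?z = "zero C X (dom C f)"
  have "comp C f ?z = comp C f (add C (smul C 0 ?z) (smul C 0 ?z))"
    using zero_eq_lincomb assms(2) f by simp
  also have "\<dots> = add C (smul C 0 (comp C f ?z)) (smul C 0 (comp C f ?z))"
    using assms f unfolding k_linear_map_def by (simp add: Hom_def)
  also have "\<dots> = zero C X (cod C f)" using assms(2) f by (simp add: smul_zero_scalar add_zero_right)
  finally show ?thesis .
qed

end

definition restrict_arrows ::
  "('o, 'm, 'k, 'z) cdak_struct_scheme \<Rightarrow> ('m \<Rightarrow> bool) \<Rightarrow> ('o, 'm, 'k, 'z) cdak_struct_scheme" where
  "restrict_arrows C Q = C\<lparr>Arr := {f \<in> Arr C. Q f}\<rparr>"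

lemma restrict_arrows_simps [simp]:
  "Arr (restrict_arrows C Q) = {f \<in> Arr C. Q f}"
  "Ob (restrict_arrows C Q) = Ob C" "dom (restrict_arrows C Q) = dom C"
  "cod (restrict_arrows C Q) = cod C" "comp (restrict_arrows C Q) = comp C"
  "ident (restrict_arrows C Q) = ident C" "smul (restrict_arrows C Q) = smul C"
  "add (restrict_arrows C Q) = add C" "zero (restrict_arrows C Q) = zero C"
  "termo (restrict_arrows C Q) = termo C" "prod (restrict_arrows C Q) = prod C"
  "p1 (restrict_arrows C Q) = p1 C" "p2 (restrict_arrows C Q) = p2 C"
  "pair (restrict_arrows C Q) = pair C" "Dif (restrict_arrows C Q) = Dif C"
  by (simp_all add: restrict_arrows_def)

lemma Hom_restrict_arrows [simp]: "Hom (restrict_arrows C Q) A B = {f \<in> Hom C A B. Q f}"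
  by (auto simp: Hom_def)

locale sub_cartesian_k_differential_category = cartesian_k_differential_category +
  fixes Q :: "'m \<Rightarrow> bool"
  assumes closed_ident: "A \<in> Ob C \<Longrightarrow> Q (ident C A)"
    and closed_comp: "f \<in> Arr C \<Longrightarrow> g \<in> Arr C \<Longrightarrow> cod C f = dom C g \<Longrightarrow> Q f \<Longrightarrow> Q g \<Longrightarrow> Q (comp C g f)"
    and closed_zero: "A \<in> Ob C \<Longrightarrow> B \<in> Ob C \<Longrightarrow> Q (zero C A B)"
    and closed_add: "f \<in> Arr C \<Longrightarrow> g \<in> Arr C \<Longrightarrow> dom C g = dom C f \<Longrightarrow> cod C g = cod C f \<Longrightarrow>
      Q f \<Longrightarrow> Q g \<Longrightarrow> Q (add C f g)"
    and closed_smul: "f \<in> Arr C \<Longrightarrow> Q f \<Longrightarrow> Q (smul C r f)"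
    and closed_p1: "A \<in> Ob C \<Longrightarrow> B \<in> Ob C \<Longrightarrow> Q (p1 C A B)"
    and closed_p2: "A \<in> Ob C \<Longrightarrow> B \<in> Ob C \<Longrightarrow> Q (p2 C A B)"
    and closed_pair: "f \<in> Arr C \<Longrightarrow> g \<in> Arr C \<Longrightarrow> dom C g = dom C f \<Longrightarrow> Q f \<Longrightarrow> Q g \<Longrightarrow> Q (pair C f g)"
    and closed_Dif: "f \<in> Arr C \<Longrightarrow> Q f \<Longrightarrow> Q (Dif C f)"
begin

lemma is_category_restrict_arrows: "is_category (restrict_arrows C Q)"
  using category unfolding is_category_def Hom_restrict_arrows restrict_arrows_simps
  by (auto simp: Hom_def closed_ident closed_comp)

lemma hom_modules_restrict_arrows: "hom_modules (restrict_arrows C Q)"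
  unfolding hom_modules_def Hom_restrict_arrows restrict_arrows_simps
  apply (intro ballI)
  subgoal premises ob
    using hom_module_laws[OF ob] closed_zero[OF ob]
    by (elim conjE) (intro conjI; auto simp: Hom_def closed_add closed_smul)
  done

lemma left_k_linear_cat_restrict_arrows: "left_k_linear_cat (restrict_arrows C Q)"
  using left_k_linear is_category_restrict_arrows hom_modules_restrict_arrows
  unfolding left_k_linear_cat_def Hom_restrict_arrows restrict_arrows_simps
  by (elim conjE) (intro conjI ballI allI; simp)

lemma has_finite_products_restrict_arrows: "has_finite_products (restrict_arrows C Q)"
  unfolding has_finite_products_def Hom_restrict_arrows restrict_arrows_simps
proof (intro conjI ballI)
  fix A assume A: "A \<in> Ob C"
  show "\<exists>!t. t \<in> {f \<in> Hom C A (termo C). Q f}"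
  proof (rule ex1I)
    show "zero C A (termo C) \<in> {f \<in> Hom C A (termo C). Q f}"
      using A by (simp add: Hom_def closed_zero)
    show "t = zero C A (termo C)" if "t \<in> {f \<in> Hom C A (termo C). Q f}" for t
      using that terminal_unique[OF A] A by (auto simp: Hom_def)
  qed
qed (auto simp: Hom_def closed_p1 closed_p2 closed_pair pair_eta)

lemma cartesian_left_k_linear_cat_restrict_arrows: "cartesian_left_k_linear_cat (restrict_arrows C Q)"
  unfolding cartesian_left_k_linear_cat_def
proof (intro conjI ballI)
  fix A B assume "A \<in> Ob (restrict_arrows C Q)" "B \<in> Ob (restrict_arrows C Q)"
  then have "k_linear_map C (p1 C A B)" "k_linear_map C (p2 C A B)"
    using cartesian_left_k_linear unfolding cartesian_left_k_linear_cat_def by simp_all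
  then show "k_linear_map (restrict_arrows C Q) (p1 (restrict_arrows C Q) A B)"
    and "k_linear_map (restrict_arrows C Q) (p2 (restrict_arrows C Q) A B)"
    using \<open>A \<in> Ob _\<close> \<open>B \<in> Ob _\<close> unfolding k_linear_map_def by (simp_all add: closed_p1 closed_p2)
qed (fact left_k_linear_cat_restrict_arrows has_finite_products_restrict_arrows)+

lemma cartesian_k_differential_cat_restrict_arrows: "cartesian_k_differential_cat (restrict_arrows C Q)"
  using cartesian_k_differential
  unfolding cartesian_k_differential_cat_def Hom_restrict_arrows restrict_arrows_simps Let_def
  apply (elim conjE)
  apply (intro conjI)
  apply (rule cartesian_left_k_linear_cat_restrict_arrows)
  apply (auto simp: Hom_def closed_Dif)[1]
  apply blast+
  apply (intro ballI; elim CollectE; meson)+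
  done

end

locale cartesian_k_differential_abstract_kleisli_category =
  fixes C :: "('o, 'm, 'k::comm_semiring_1, 'z) cdak_struct_scheme"
  assumes differential_abstract_kleisli: "cartesian_k_differential_abstract_kleisli C"

sublocale cartesian_k_differential_abstract_kleisli_category \<subseteq> cartesian_k_differential_category
  using differential_abstract_kleisli
  by unfold_locales (simp add: cartesian_k_differential_abstract_kleisli_def)

context cartesian_k_differential_abstract_kleisli_category
begin

lemma abstract_kleisli: "abstract_kleisli C"
  and projections_theta_natural: "A \<in> Ob C \<Longrightarrow> B \<in> Ob C \<Longrightarrow> theta_natural C (p1 C A B) \<and> theta_natural C (p2 C A B)"
  and S_strong_differential: "S_strong_cartesian_k_differential C"
  and theta_D_linear: "A \<in> Ob C \<Longrightarrow> D_linear C (theta C A)"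
  using differential_abstract_kleisli unfolding cartesian_k_differential_abstract_kleisli_def by blast+

lemma S_strong_linear: "S_strong_cartesian_k_linear C"
  using S_strong_differential unfolding S_strong_cartesian_k_differential_def by blast

lemma S_endofunctor: "S_endofunctor C"
  using abstract_kleisli unfolding abstract_kleisli_def by blast

lemma S_ob_in_Ob [simp]: "A \<in> Ob C \<Longrightarrow> S_ob C A \<in> Ob C"
  using S_endofunctor unfolding S_endofunctor_def by blast

lemma S_ar_typing:
  assumes "f \<in> Arr C"
  shows "S_ar C f \<in> Hom C (S_ob C (dom C f)) (S_ob C (cod C f))"
proof -
  have "\<forall>A \<in> Ob C. \<forall>B \<in> Ob C. \<forall>f \<in> Hom C A B. S_ar C f \<in> Hom C (S_ob C A) (S_ob C B)"
    using S_endofunctor unfolding S_endofunctor_def by blast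
  from this[rule_format, of "dom C f" "cod C f" f] show ?thesis
    using assms by (simp add: Hom_def)
qed

lemma S_ar_in_Arr [simp]: "f \<in> Arr C \<Longrightarrow> S_ar C f \<in> Arr C"
  and dom_S_ar [simp]: "f \<in> Arr C \<Longrightarrow> dom C (S_ar C f) = S_ob C (dom C f)"
  and cod_S_ar [simp]: "f \<in> Arr C \<Longrightarrow> cod C (S_ar C f) = S_ob C (cod C f)"
  using S_ar_typing unfolding Hom_def by blast+

lemma S_ar_ident [simp]: "A \<in> Ob C \<Longrightarrow> S_ar C (ident C A) = ident C (S_ob C A)"
  using S_endofunctor unfolding S_endofunctor_def by blast

lemma S_ar_comp [simp]:
  assumes "f \<in> Arr C" "g \<in> Arr C" "cod C f = dom C g"
  shows "S_ar C (comp C g f) = comp C (S_ar C g) (S_ar C f)"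
proof -
  have "\<forall>A \<in> Ob C. \<forall>B \<in> Ob C. \<forall>E \<in> Ob C. \<forall>f \<in> Hom C A B. \<forall>g \<in> Hom C B E.
        S_ar C (comp C g f) = comp C (S_ar C g) (S_ar C f)"
    using S_endofunctor unfolding S_endofunctor_def by blast
  from this[rule_format, of "dom C f" "cod C f" "cod C g" f g] show ?thesis
    using assms by (simp add: Hom_def)
qed

lemma S_ar_lincomb:
  assumes "f \<in> Arr C" "g \<in> Arr C" "dom C g = dom C f" "cod C g = cod C f"
  shows "S_ar C (add C (smul C r f) (smul C s g)) = add C (smul C r (S_ar C f)) (smul C s (S_ar C g))"
proof -
  have "\<forall>A \<in> Ob C. \<forall>B \<in> Ob C. \<forall>r s. \<forall>f \<in> Hom C A B. \<forall>g \<in> Hom C A B.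
        S_ar C (add C (smul C r f) (smul C s g)) = add C (smul C r (S_ar C f)) (smul C s (S_ar C g))"
    using S_strong_linear unfolding S_strong_cartesian_k_linear_def by blast
  from this[rule_format, where A = "dom C f" and B = "cod C f" and r = r and s = s and f = f and g = g]
  show ?thesis using assms by (simp add: Hom_def)
qed

lemma S_ar_zero: "A \<in> Ob C \<Longrightarrow> B \<in> Ob C \<Longrightarrow> S_ar C (zero C A B) = zero C (S_ob C A) (S_ob C B)"
  using S_ar_lincomb[of "zero C A B" "zero C A B" 0 0]
  by (simp flip: zero_eq_lincomb add: smul_zero_scalar add_zero_right)

lemma S_ar_Dif:
  assumes "f \<in> Arr C" "is_inverse C w (omega C (dom C f) (dom C f))"
  shows "Dif C (S_ar C f) = comp C (S_ar C (Dif C f)) w"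
proof -
  have "\<forall>A \<in> Ob C. \<forall>B \<in> Ob C. \<forall>f \<in> Hom C A B. \<forall>w.
        is_inverse C w (omega C A A) \<longrightarrow> Dif C (S_ar C f) = comp C (S_ar C (Dif C f)) w"
    using S_strong_differential unfolding S_strong_cartesian_k_differential_def by blast
  from this[rule_format, of "dom C f" "cod C f" f w] show ?thesis
    using assms by (simp add: Hom_def)
qed

lemma theta_in_Arr [simp]: "A \<in> Ob C \<Longrightarrow> theta C A \<in> Arr C"
  and dom_theta [simp]: "A \<in> Ob C \<Longrightarrow> dom C (theta C A) = A"
  and cod_theta [simp]: "A \<in> Ob C \<Longrightarrow> cod C (theta C A) = S_ob C A"
  using abstract_kleisli unfolding abstract_kleisli_def Hom_def by blast+

lemma theta_comp_zero: "X \<in> Ob C \<Longrightarrow> A \<in> Ob C \<Longrightarrow> comp C (theta C A) (zero C X A) = zero C X (S_ob C A)"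
  using k_linear_map_comp_zero[OF D_linear_imp_k_linear_map[OF theta_in_Arr theta_D_linear]] by simp

lemma omega_in_Arr [simp]: "A \<in> Ob C \<Longrightarrow> B \<in> Ob C \<Longrightarrow> omega C A B \<in> Arr C"
  and dom_omega [simp]: "A \<in> Ob C \<Longrightarrow> B \<in> Ob C \<Longrightarrow> dom C (omega C A B) = S_ob C (prod C A B)"
  and cod_omega [simp]: "A \<in> Ob C \<Longrightarrow> B \<in> Ob C \<Longrightarrow> cod C (omega C A B) = prod C (S_ob C A) (S_ob C B)"
  unfolding omega_def by simp_all

lemma omega_inverse:
  assumes "A \<in> Ob C" "B \<in> Ob C"
  obtains w where "is_inverse C w (omega C A B)" "w \<in> Arr C"
    "dom C w = prod C (S_ob C A) (S_ob C B)" "cod C w = S_ob C (prod C A B)"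
    "comp C w (omega C A B) = ident C (S_ob C (prod C A B))"
proof -
  have "is_iso C (omega C A B)"
    using S_strong_linear assms unfolding S_strong_cartesian_k_linear_def by blast
  then obtain w where "is_inverse C w (omega C A B)"
    unfolding is_iso_def is_inverse_def by blast
  with assms show ?thesis
    by (intro that[of w]) (auto simp: is_inverse_def Hom_def)
qed

lemma omega_left_cancel:
  assumes "comp C (omega C A B) u = comp C (omega C A B) v"
    and "A \<in> Ob C" "B \<in> Ob C" "u \<in> Arr C" "v \<in> Arr C" "dom C v = dom C u"
    and "cod C u = S_ob C (prod C A B)" "cod C v = S_ob C (prod C A B)"
  shows "u = v"
proof -
  obtain w where w: "w \<in> Arr C" "dom C w = prod C (S_ob C A) (S_ob C B)"
    "comp C w (omega C A B) = ident C (S_ob C (prod C A B))"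
    using omega_inverse[OF assms(2,3)] by blast
  from assms(1) have "comp C w (comp C (omega C A B) u) = comp C w (comp C (omega C A B) v)"
    by simp
  then show ?thesis using assms(2-8) w by (simp flip: comp_assoc)
qed

lemma omega_comp_theta:
  assumes "A \<in> Ob C" "B \<in> Ob C"
  shows "comp C (omega C A B) (theta C (prod C A B))
       = pair C (comp C (theta C A) (p1 C A B)) (comp C (theta C B) (p2 C A B))"
  using assms projections_theta_natural[OF assms] unfolding omega_def theta_natural_def by simp

lemma Dif_S_ar_comp_theta:
  assumes f: "f \<in> Arr C" and A: "dom C f = A"
  shows "Dif C (comp C (S_ar C f) (theta C A)) = comp C (S_ar C (Dif C f)) (theta C (prod C A A))"
proof -
  have ob: "A \<in> Ob C" using f A by auto
  obtain w where w: "is_inverse C w (omega C A A)" "w \<in> Arr C"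
    "dom C w = prod C (S_ob C A) (S_ob C A)" "cod C w = S_ob C (prod C A A)"
    "comp C w (omega C A A) = ident C (S_ob C (prod C A A))"
    using omega_inverse[OF ob ob] by blast
  have "Dif C (comp C (S_ar C f) (theta C A))
      = comp C (Dif C (S_ar C f)) (pair C (comp C (theta C A) (p1 C A A)) (Dif C (theta C A)))"
    using f A ob by (simp add: Dif_comp)
  also have "\<dots> = comp C (comp C (S_ar C (Dif C f)) w) (comp C (omega C A A) (theta C (prod C A A)))"
    using S_ar_Dif[OF f] w A ob theta_D_linear[OF ob]
    by (simp add: omega_comp_theta D_linear_def)
  also have "\<dots> = comp C (S_ar C (Dif C f)) (comp C w (comp C (omega C A A) (theta C (prod C A A))))"
    using f A ob w by simp
  also have "comp C w (comp C (omega C A A) (theta C (prod C A A))) = theta C (prod C A A)"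
    using ob w by (simp flip: comp_assoc)
  finally show ?thesis .
qed

lemma theta_natural_ident: "A \<in> Ob C \<Longrightarrow> theta_natural C (ident C A)"
  unfolding theta_natural_def by simp

lemma theta_natural_comp:
  assumes f: "f \<in> Arr C" and g: "g \<in> Arr C" and fg: "cod C f = dom C g"
    and "theta_natural C f" "theta_natural C g"
  shows "theta_natural C (comp C g f)"
proof -
  have nat_f: "comp C (theta C (dom C g)) f = comp C (S_ar C f) (theta C (dom C f))"
    and nat_g: "comp C (theta C (cod C g)) g = comp C (S_ar C g) (theta C (dom C g))"
    using assms unfolding theta_natural_def by auto
  have "comp C (theta C (cod C g)) (comp C g f) = comp C (comp C (theta C (cod C g)) g) f"
    using f g fg by simp
  also have "\<dots> = comp C (S_ar C g) (comp C (theta C (dom C g)) f)"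
    using f g fg by (simp add: nat_g)
  also have "\<dots> = comp C (S_ar C (comp C g f)) (theta C (dom C f))"
    using f g fg by (simp add: nat_f)
  finally show ?thesis
    unfolding theta_natural_def using f g fg by simp
qed

lemma theta_natural_zero: "A \<in> Ob C \<Longrightarrow> B \<in> Ob C \<Longrightarrow> theta_natural C (zero C A B)"
  unfolding theta_natural_def by (simp add: theta_comp_zero S_ar_zero)

lemma theta_natural_pair:
  assumes f: "f \<in> Arr C" and g: "g \<in> Arr C" and fg: "dom C g = dom C f"
    and "theta_natural C f" "theta_natural C g"
  shows "theta_natural C (pair C f g)"
proof -
  define A B X where "A = cod C f" and "B = cod C g" and "X = dom C f"
  have ob: "A \<in> Ob C" "B \<in> Ob C" "X \<in> Ob C"
    and types: "cod C f = A" "cod C g = B" "dom C f = X" "dom C g = X"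
    using f g fg by (auto simp: A_def B_def X_def)
  have nat_f: "comp C (theta C A) f = comp C (S_ar C f) (theta C X)"
    and nat_g: "comp C (theta C B) g = comp C (S_ar C g) (theta C X)"
    using assms types unfolding theta_natural_def by auto
  have "comp C (omega C A B) (comp C (theta C (prod C A B)) (pair C f g))
      = comp C (comp C (omega C A B) (theta C (prod C A B))) (pair C f g)"
    using f g types ob by simp
  also have "\<dots> = pair C (comp C (theta C A) f) (comp C (theta C B) g)"
    using f g types ob by (simp add: omega_comp_theta)
  also have "\<dots> = comp C (omega C A B) (comp C (S_ar C (pair C f g)) (theta C X))"
    using f g types ob unfolding nat_f nat_g omega_def by (simp flip: comp_assoc S_ar_comp)
  finally have "comp C (theta C (prod C A B)) (pair C f g) = comp C (S_ar C (pair C f g)) (theta C X)"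
    by (rule omega_left_cancel) (use f g types ob in simp_all)
  then show ?thesis
    unfolding theta_natural_def using f g types by simp
qed

lemma theta_natural_lincomb:
  assumes f: "f \<in> Arr C" and g: "g \<in> Arr C" and fg: "dom C g = dom C f" "cod C g = cod C f"
    and "theta_natural C f" "theta_natural C g"
  shows "theta_natural C (add C (smul C r f) (smul C s g))"
proof -
  define A B where "A = dom C f" and "B = cod C f"
  have ob: "A \<in> Ob C" "B \<in> Ob C"
    and types: "dom C f = A" "cod C f = B" "dom C g = A" "cod C g = B"
    using f fg by (auto simp: A_def B_def)
  have nat_f: "comp C (theta C B) f = comp C (S_ar C f) (theta C A)"
    and nat_g: "comp C (theta C B) g = comp C (S_ar C g) (theta C A)"
    using assms types unfolding theta_natural_def by auto
  have "k_linear_map C (theta C B)"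
    using D_linear_imp_k_linear_map theta_D_linear ob by simp
  then have "comp C (theta C B) (add C (smul C r f) (smul C s g))
      = add C (smul C r (comp C (theta C B) f)) (smul C s (comp C (theta C B) g))"
    using f g types ob unfolding k_linear_map_def by (simp add: Hom_def)
  also have "\<dots> = comp C (add C (smul C r (S_ar C f)) (smul C s (S_ar C g))) (theta C A)"
    using f g types ob by (simp add: nat_f nat_g comp_lincomb_left)
  also have "\<dots> = comp C (S_ar C (add C (smul C r f) (smul C s g))) (theta C A)"
    using f g types by (simp add: S_ar_lincomb)
  finally show ?thesis
    unfolding theta_natural_def using f g types by simp
qed

lemma theta_natural_Dif:
  assumes f: "f \<in> Arr C" and "theta_natural C f"
  shows "theta_natural C (Dif C f)"
proof -
  have "comp C (theta C (cod C f)) (Dif C f) = Dif C (comp C (theta C (cod C f)) f)"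
    using f theta_D_linear by (simp add: Dif_comp_D_linear)
  also have "\<dots> = Dif C (comp C (S_ar C f) (theta C (dom C f)))"
    using \<open>theta_natural C f\<close> unfolding theta_natural_def by simp
  also have "\<dots> = comp C (S_ar C (Dif C f)) (theta C (prod C (dom C f) (dom C f)))"
    using f by (simp add: Dif_S_ar_comp_theta)
  finally show ?thesis
    unfolding theta_natural_def using f by simp
qed

lemma theta_natural_add:
  "f \<in> Arr C \<Longrightarrow> g \<in> Arr C \<Longrightarrow> dom C g = dom C f \<Longrightarrow> cod C g = cod C f \<Longrightarrow>
   theta_natural C f \<Longrightarrow> theta_natural C g \<Longrightarrow> theta_natural C (add C f g)"
  using theta_natural_lincomb[of f g 1 1] by (simp add: smul_one)

lemma theta_natural_smul: "f \<in> Arr C \<Longrightarrow> theta_natural C f \<Longrightarrow> theta_natural C (smul C r f)"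
  using theta_natural_lincomb[of f f r 0] by (simp add: smul_zero_scalar add_zero_right)

end

sublocale cartesian_k_differential_abstract_kleisli_category \<subseteq>
  theta_natural_maps: sub_cartesian_k_differential_category C "theta_natural C"
  by unfold_locales
    (simp_all add: theta_natural_ident theta_natural_comp theta_natural_zero theta_natural_add
      theta_natural_smul projections_theta_natural theta_natural_pair theta_natural_Dif)

theorem mainTheorem5:
  fixes C :: "('o, 'm, 'k::comm_semiring_1) cdak_struct"
  assumes "cartesian_k_differential_abstract_kleisli C"
  shows "(\<forall>A \<in> Ob C. theta_natural C (ident C A))
    \<and> (\<forall>f \<in> Arr C. \<forall>g \<in> Arr C. theta_natural C f \<longrightarrow> theta_natural C g \<longrightarrow>
          cod C f = dom C g \<longrightarrow> theta_natural C (comp C g f))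
    \<and> (\<forall>A \<in> Ob C. theta_natural C (zero C A (termo C)))
    \<and> (\<forall>A \<in> Ob C. \<forall>B \<in> Ob C. theta_natural C (p1 C A B) \<and> theta_natural C (p2 C A B))
    \<and> (\<forall>X \<in> Ob C. \<forall>A \<in> Ob C. \<forall>B \<in> Ob C. \<forall>f \<in> Hom C X A. \<forall>g \<in> Hom C X B.
          theta_natural C f \<longrightarrow> theta_natural C g \<longrightarrow> theta_natural C (pair C f g))
    \<and> (\<forall>A \<in> Ob C. \<forall>B \<in> Ob C. theta_natural C (zero C A B))
    \<and> (\<forall>A \<in> Ob C. \<forall>B \<in> Ob C. \<forall>r s. \<forall>f \<in> Hom C A B. \<forall>g \<in> Hom C A B.
          theta_natural C f \<longrightarrow> theta_natural C g \<longrightarrow>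
          theta_natural C (add C (smul C r f) (smul C s g)))
    \<and> (\<forall>f \<in> Arr C. theta_natural C f \<longrightarrow> theta_natural C (Dif C f))
    \<and> cartesian_k_differential_cat (theta_nat_sub C)"
proof -
  interpret cartesian_k_differential_abstract_kleisli_category C
    by unfold_locales (fact assms)
  have "theta_nat_sub C = restrict_arrows C (theta_natural C)"
    unfolding theta_nat_sub_def restrict_arrows_def ..
  then show ?thesis
    using theta_natural_maps.cartesian_k_differential_cat_restrict_arrows
    by (auto simp: Hom_def theta_natural_ident theta_natural_comp theta_natural_zero
        projections_theta_natural theta_natural_pair theta_natural_lincomb theta_natural_Dif)
qed

end
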